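(* Let $E$ be a finite nonempty set, $f:2^E\to\mathbb{N}$ an integral polymatroid rank function, and let $C_e:\mathbb{N}\times\mathbb{N}\to\mathbb{R}_+$, $e\in E$, be regular functions. Let $D\subseteq\mathbb{N}$ be a set of integers with $\mathbb{B}_f(d)\neq\emptyset$ for all $d\in D$. Then for every $\vec t\in\mathbb{N}^E$, every $d\in D$, every optimal solution $\vec x^*(\vec t,d)$ of $P(\vec t,d)$, every $d'\in D$ and every $\vec t'\in\mathbb{N}^E$, there is an optimal solution $\vec x^*(\vec t',d')$ of $P(\vec t',d')$ that can be obtained from $\vec x^*(\vec t,d)$ by performing at most $\|\vec t-\vec t'\|+|d-d'|$ elementary exchange steps.
   Context: $\mathbb{N}=\{0,1,2,\dots\}$. A set function $f:2^E\to\mathbb{N}$ is an integral polymatroid rank function if $f(\emptyset)=0$, $f$ is monotone and submodular. For $\vec x\in\mathbb{N}^E$, $x(U)=\sum_{e\in U}x_e$; $\mathbb{B}_f(d)=\{\vec x\in\mathbb{N}^E: x(U)\le f(U)\ \forall U\subseteq E,\ x(E)=d\}$. $P(\vec t,d)$: minimize $\sum_{e\in E}C_e(x_e;t_e)$ subject to $\vec x\in\mathbb{B}_f(d)$. $\|\cdot\|$ is the $L_1$-norm. For $C:\mathbb{N}\times\mathbb{N}\to\mathbb{R}$, $C^-(x;t)=C(x;t)-C(x-1;t)$ for $x\ge1$; $C$ is regular if $C^-(x;t)\le C^-(x;t+1)$ and $C^-(x;t+1)\le C^-(x+1;t)$ for all $x\ge1$, $t\in\mathbb{N}$. An elementary exchange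 step modifies the current integral vector either by shifting one unit from one element to another (adding $\chi_g-\chi_e$ for some $e\neq g$, $\chi_e$ the unit vector of $e$) or by adding (or removing) one unit at a single element. *)

theory Defs
  imports Complex_Main
begin

definition polymatroid_rank :: "'a set \<Rightarrow> ('a set \<Rightarrow> nat) \<Rightarrow> bool" where
  "polymatroid_rank E f \<longleftrightarrow>
     f {} = 0 \<and>
     (\<forall>A B. A \<subseteq> B \<and> B \<subseteq> E \<longrightarrow> f A \<le> f B) \<and>
     (\<forall>A B. A \<subseteq> E \<and> B \<subseteq> E \<longrightarrow> f (A \<union> B) + f (A \<inter> B) \<le> f A + f B)"

text \<open>Vectors in N^E are functions 'a => nat vanishing outside E.\<close>
definition base_set :: "'a set \<Rightarrow> ('a set \<Rightarrow> nat) \<Rightarrow> nat \<Rightarrow> ('a \<Rightarrow> nat) set" where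
  "base_set E f d = {x. (\<forall>e. e \<notin> E \<longrightarrow> x e = 0) \<and>
                         (\<forall>U. U \<subseteq> E \<longrightarrow> sum x U \<le> f U) \<and> sum x E = d}"

definition marg :: "(nat \<Rightarrow> nat \<Rightarrow> real) \<Rightarrow> nat \<Rightarrow> nat \<Rightarrow> real" where
  "marg C x t = C x t - C (x - 1) t"

definition regular :: "(nat \<Rightarrow> nat \<Rightarrow> real) \<Rightarrow> bool" where
  "regular C \<longleftrightarrow> (\<forall>x t. x \<ge> 1 \<longrightarrow>
      marg C x t \<le> marg C x (t + 1) \<and> marg C x (t + 1) \<le> marg C (x + 1) t)"

definition total_cost :: "'a set \<Rightarrow> ('a \<Rightarrow> nat \<Rightarrow> nat \<Rightarrow> real) \<Rightarrow> ('a \<Rightarrow> nat) \<Rightarrow> ('a \<Rightarrow> nat) \<Rightarrow> real" where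
  "total_cost E C t x = (\<Sum>e\<in>E. C e (x e) (t e))"

definition optimal :: "'a set \<Rightarrow> ('a set \<Rightarrow> nat) \<Rightarrow> ('a \<Rightarrow> nat \<Rightarrow> nat \<Rightarrow> real)
    \<Rightarrow> ('a \<Rightarrow> nat) \<Rightarrow> nat \<Rightarrow> ('a \<Rightarrow> nat) \<Rightarrow> bool" where
  "optimal E f C t d x \<longleftrightarrow> x \<in> base_set E f d \<and>
     (\<forall>y \<in> base_set E f d. total_cost E C t x \<le> total_cost E C t y)"

definition exch_step :: "'a set \<Rightarrow> ('a \<Rightarrow> nat) \<Rightarrow> ('a \<Rightarrow> nat) \<Rightarrow> bool" where
  "exch_step E x y \<longleftrightarrow>
     (\<exists>e\<in>E. \<exists>g\<in>E. e \<noteq> g \<and> x e \<ge> 1 \<and> y = x(e := x e - 1, g := x g + 1)) \<or>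
     (\<exists>e\<in>E. y = x(e := x e + 1)) \<or>
     (\<exists>e\<in>E. x e \<ge> 1 \<and> y = x(e := x e - 1))"

definition l1_dist :: "'a set \<Rightarrow> ('a \<Rightarrow> nat) \<Rightarrow> ('a \<Rightarrow> nat) \<Rightarrow> nat" where
  "l1_dist E t t' = (\<Sum>e\<in>E. nat \<bar>int (t e) - int (t' e)\<bar>)"

end

theory Submission
  imports Defs
begin

(* Each elementary change of the parameters (d to d \<plusminus> 1, or one t_e to t_e \<plusminus> 1) can be
   followed by at most one exchange step.  Given an optimum x of the old problem, take among the
   optima of the new problem one, v, closest to x in L1-distance.  If v were further from x, the
   exchange property of polymatroid bases would yield coordinates p, q with x_p < v_p and
   v_q < x_q such that moving a unit from q to p in x and from p to q in v is feasible.  The first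
   move does not decrease the old cost, and regularity transfers this to the second move under
   the new cost; so the second move yields an optimum of the new problem closer to x.
   Chaining ||t - t'|| + |d - d'| elementary changes gives the theorem. *)

lemma sum_fun_upd:
  fixes F :: "'a \<Rightarrow> 'b \<Rightarrow> 'c::comm_monoid_add"
  assumes "finite U" "a \<in> U"
  shows "(\<Sum>e\<in>U. F e ((x(a := k)) e)) + F a (x a) = (\<Sum>e\<in>U. F e (x e)) + F a k"
proof -
  have "(\<Sum>e\<in>U - {a}. F e ((x(a := k)) e)) = (\<Sum>e\<in>U - {a}. F e (x e))"
    by (intro sum.cong) auto
  then show ?thesis
    using assms by (simp add: sum.remove ac_simps)
qed

lemma sum_fun_upd_notin: "a \<notin> U \<Longrightarrow> sum (x(a := k)) U = sum x U"
  by (intro sum.cong) auto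

lemma sum_fun_upd_nat:
  fixes x :: "'a \<Rightarrow> nat"
  assumes "finite U"
  shows "sum (x(a := k)) U + (if a \<in> U then x a else 0) = sum x U + (if a \<in> U then k else 0)"
  using sum_fun_upd[OF assms, of a "\<lambda>_ z. z"] sum_fun_upd_notin[of a U] by auto

lemma sum_transfer_unit:
  fixes x :: "'a \<Rightarrow> nat"
  assumes "finite U" "g \<noteq> h" "1 \<le> x h"
  shows "sum (x(g := x g + 1, h := x h - 1)) U + (if h \<in> U then 1 else 0)
       = sum x U + (if g \<in> U then 1 else 0)"
  using sum_fun_upd_nat[OF assms(1), of x g "x g + 1"]
    sum_fun_upd_nat[OF assms(1), of "x(g := x g + 1)" h "x h - 1"] assms(2,3)
  by (auto split: if_splits)

lemma finite_base_set:
  assumes "finite E"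
  shows "finite (base_set E f d)"
proof (rule finite_subset)
  have "x e \<le> d" if "x \<in> base_set E f d" "e \<in> E" for x e
    using member_le_sum[of e E x, OF that(2) _ assms] that(1) by (simp add: base_set_def)
  then show "base_set E f d \<subseteq> {x. \<forall>e. (e \<in> E \<longrightarrow> x e \<in> {..d}) \<and> (e \<notin> E \<longrightarrow> x e = 0)}"
    by (auto simp: base_set_def)
  show "finite {x. \<forall>e. (e \<in> E \<longrightarrow> x e \<in> {..d}) \<and> (e \<notin> E \<longrightarrow> x e = (0::nat))}"
    using assms by (intro finite_set_of_finite_funs) auto
qed

lemma base_set_remove_unit:
  assumes "finite E" "x \<in> base_set E f d" "1 \<le> d"
  shows "\<exists>e\<in>E. 1 \<le> x e \<and> x(e := x e - 1) \<in> base_set E f (d - 1)"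
proof -
  have "sum x E \<noteq> 0"
    using assms(2,3) by (simp add: base_set_def)
  then obtain e where e: "e \<in> E" "1 \<le> x e"
    by (metis One_nat_def Suc_leI not_gr0 sum.neutral)
  have "sum (x(e := x e - 1)) U \<le> sum x U" if "U \<subseteq> E" for U
    using sum_fun_upd_nat[OF finite_subset[OF that assms(1)], of x e "x e - 1"] by (auto split: if_splits)
  moreover have "sum (x(e := x e - 1)) E = d - 1"
    using sum_fun_upd_nat[OF assms(1), of x e "x e - 1"] e assms(2) by (simp add: base_set_def)
  ultimately have "x(e := x e - 1) \<in> base_set E f (d - 1)"
    using assms(2) e(1) by (auto simp: base_set_def intro: order_trans)
  then show ?thesis
    using e by blast
qed

lemma base_set_nonempty_le:
  assumes "finite E" "base_set E f d \<noteq> {}" "d' \<le> d"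
  shows "base_set E f d' \<noteq> {}"
  using assms(3,2)
proof (induction d' rule: inc_induct)
  case (step n)
  then obtain x where "x \<in> base_set E f (Suc n)"
    by blast
  then show ?case
    using base_set_remove_unit[OF assms(1), of x f "Suc n"] by auto
qed

lemma base_set_transfer_unit:
  assumes "finite E" "x \<in> base_set E f d" "g \<in> E" "h \<in> E" "g \<noteq> h" "1 \<le> x h"
    and slack: "\<And>U. U \<subseteq> E \<Longrightarrow> g \<in> U \<Longrightarrow> h \<notin> U \<Longrightarrow> sum x U < f U"
  shows "x(g := x g + 1, h := x h - 1) \<in> base_set E f d"
proof -
  let ?x = "x(g := x g + 1, h := x h - 1)"
  have "sum ?x U \<le> f U" if "U \<subseteq> E" for U
    using sum_transfer_unit[of U g h x, OF finite_subset[OF that assms(1)] assms(5,6)] slack[OF that]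
      assms(2) that by (auto simp: base_set_def split: if_splits)
  moreover have "sum ?x E = d"
    using sum_transfer_unit[of E g h x, OF assms(1,5,6)] assms(2,3,4) by (simp add: base_set_def)
  ultimately show ?thesis
    using assms(2,3,4) by (auto simp: base_set_def)
qed

lemma tight_Un_Int:
  fixes x :: "'a \<Rightarrow> nat"
  assumes "polymatroid_rank E f" "\<And>U. U \<subseteq> E \<Longrightarrow> sum x U \<le> f U"
    and "finite A" "finite B" "A \<subseteq> E" "B \<subseteq> E" "sum x A = f A" "sum x B = f B"
  shows "sum x (A \<union> B) = f (A \<union> B)" "sum x (A \<inter> B) = f (A \<inter> B)"
proof -
  have "f (A \<union> B) + f (A \<inter> B) \<le> f A + f B"
    using assms(1,5,6) by (auto simp: polymatroid_rank_def)
  moreover have "sum x (A \<union> B) \<le> f (A \<union> B)" "sum x (A \<inter> B) \<le> f (A \<inter> B)"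
    using assms(2)[of "A \<union> B"] assms(2)[of "A \<inter> B"] assms(5,6) by auto
  ultimately show "sum x (A \<union> B) = f (A \<union> B)" "sum x (A \<inter> B) = f (A \<inter> B)"
    using sum.union_inter[OF assms(3,4), of x] assms(7,8) by linarith+
qed

lemma tight_Union:
  fixes x :: "'a \<Rightarrow> nat"
  assumes "finite E" "polymatroid_rank E f" "\<And>U. U \<subseteq> E \<Longrightarrow> sum x U \<le> f U"
    and "finite \<F>" "\<And>U. U \<in> \<F> \<Longrightarrow> U \<subseteq> E \<and> sum x U = f U"
  shows "sum x (\<Union>\<F>) = f (\<Union>\<F>)"
  using assms(4,5)
proof (induction \<F> rule: finite_induct)
  case empty
  then show ?case
    using assms(2) by (simp add: polymatroid_rank_def)
next
  case (insert A \<F>)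
  have "A \<subseteq> E" "sum x A = f A" "\<Union>\<F> \<subseteq> E" "sum x (\<Union>\<F>) = f (\<Union>\<F>)"
    using insert by auto
  then show ?case
    using tight_Un_Int(1)[OF assms(2,3) finite_subset finite_subset, of A E "\<Union>\<F>"] assms(1)
    by simp
qed

lemma tight_Inter:
  fixes x :: "'a \<Rightarrow> nat"
  assumes "finite E" "polymatroid_rank E f" "\<And>U. U \<subseteq> E \<Longrightarrow> sum x U \<le> f U"
    and "finite \<F>" "\<F> \<noteq> {}" "\<And>U. U \<in> \<F> \<Longrightarrow> U \<subseteq> E \<and> sum x U = f U"
  shows "sum x (\<Inter>\<F>) = f (\<Inter>\<F>)"
  using assms(4,5,6)
proof (induction \<F> rule: finite_ne_induct)
  case (insert A \<F>)
  have "A \<subseteq> E" "sum x A = f A" "\<Inter>\<F> \<subseteq> E" "sum x (\<Inter>\<F>) = f (\<Inter>\<F>)"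
    using insert by auto
  then show ?case
    using tight_Un_Int(2)[OF assms(2,3) finite_subset finite_subset, of A E "\<Inter>\<F>"] assms(1)
    by simp
qed simp

(* W is the largest x-tight set avoiding h and T the smallest y-tight set containing h (or E);
   an element g of T - W with x g < y g exists by submodularity and admits both transfers. *)
lemma base_set_exchange:
  assumes "finite E" "polymatroid_rank E f"
    and x: "x \<in> base_set E f dx" and y: "y \<in> base_set E f dy" and "dx \<le> dy"
    and "h \<in> E" "y h < x h"
  shows "\<exists>g\<in>E. g \<noteq> h \<and> x g < y g \<and> x(g := x g + 1, h := x h - 1) \<in> base_set E f dx
           \<and> y(g := y g - 1, h := y h + 1) \<in> base_set E f dy"
proof -
  have x_le: "\<And>U. U \<subseteq> E \<Longrightarrow> sum x U \<le> f U" and y_le: "\<And>U. U \<subseteq> E \<Longrightarrow> sum y U \<le> f U"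
    using x y by (auto simp: base_set_def)
  define \<W> where "\<W> = {U. U \<subseteq> E \<and> h \<notin> U \<and> sum x U = f U}"
  define W where "W = \<Union>\<W>"
  define \<T> where "\<T> = {U. U \<subseteq> E \<and> h \<in> U \<and> sum y U = f U}"
  define T where "T = (if \<T> = {} then E else \<Inter>\<T>)"
  have "finite \<W>" "finite \<T>"
    using assms(1) unfolding \<W>_def \<T>_def by (simp_all add: finite_subset[of _ "Pow E"] subset_eq)
  have "W \<subseteq> E" "h \<notin> W" "T \<subseteq> E" "h \<in> T"
    using \<open>h \<in> E\<close> unfolding W_def \<W>_def T_def \<T>_def by auto
  then have fin: "finite W" "finite T"
    using assms(1) finite_subset by blast+
  have "\<And>U. U \<in> \<W> \<Longrightarrow> U \<subseteq> E \<and> sum x U = f U"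
    unfolding \<W>_def by blast
  then have W_tight: "sum x W = f W"
    unfolding W_def using tight_Union[OF assms(1,2) x_le \<open>finite \<W>\<close>] by blast
  have W_max: "U \<subseteq> W" if "U \<subseteq> E" "h \<notin> U" "sum x U = f U" for U
    using that unfolding W_def \<W>_def by auto
  have T_min: "T \<subseteq> U" if "U \<subseteq> E" "h \<in> U" "sum y U = f U" for U
    using that unfolding T_def \<T>_def by auto
  have "\<exists>g\<in>T - W. x g < y g"
  proof (rule ccontr)
    assume "\<not> ?thesis"
    then have less: "sum y (T - W) < sum x (T - W)"
      using \<open>h \<in> T\<close> \<open>h \<notin> W\<close> \<open>y h < x h\<close> fin
      by (intro sum_strict_mono_ex1) (auto simp: not_less)
    show False
    proof (cases "\<T> = {}")
      case True
      then have "T = E"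
        unfolding T_def by simp
      moreover have "sum x E = dx" "sum y E = dy"
        using x y by (auto simp: base_set_def)
      ultimately show False
        using less[unfolded \<open>T = E\<close>] sum.subset_diff[OF \<open>W \<subseteq> E\<close> assms(1), of x] sum.subset_diff[OF \<open>W \<subseteq> E\<close> assms(1), of y]
          y_le[OF \<open>W \<subseteq> E\<close>] W_tight \<open>dx \<le> dy\<close> by linarith
    next
      case False
      have "\<And>U. U \<in> \<T> \<Longrightarrow> U \<subseteq> E \<and> sum y U = f U"
        unfolding \<T>_def by blast
      then have T_tight: "sum y T = f T"
        unfolding T_def using False tight_Inter[OF assms(1,2) y_le \<open>finite \<T>\<close> False] by simp
      have "sum x (T \<union> W) = sum x (T - W) + sum x W"
        using sum.subset_diff[of W "T \<union> W" x] fin by (simp add: Un_Diff)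
      moreover have "sum y T = sum y (T - W) + sum y (T \<inter> W)"
        using sum.subset_diff[of "T \<inter> W" T y] fin by (simp add: Diff_Int)
      moreover have "f (T \<union> W) + f (T \<inter> W) \<le> f T + f W"
        using assms(2) \<open>T \<subseteq> E\<close> \<open>W \<subseteq> E\<close> by (auto simp: polymatroid_rank_def)
      moreover have "sum x (T \<union> W) \<le> f (T \<union> W)" "sum y (T \<inter> W) \<le> f (T \<inter> W)"
        using x_le[of "T \<union> W"] y_le[of "T \<inter> W"] \<open>T \<subseteq> E\<close> \<open>W \<subseteq> E\<close> by auto
      ultimately show False
        using less T_tight W_tight by linarith
    qed
  qed
  then obtain g where g: "g \<in> T" "g \<notin> W" "x g < y g"
    by blast
  have "g \<in> E" "g \<noteq> h"
    using g \<open>T \<subseteq> E\<close> \<open>y h < x h\<close> by auto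
  have "x(g := x g + 1, h := x h - 1) \<in> base_set E f dx"
  proof (rule base_set_transfer_unit[OF assms(1) x \<open>g \<in> E\<close> \<open>h \<in> E\<close> \<open>g \<noteq> h\<close>])
    show "sum x U < f U" if "U \<subseteq> E" "g \<in> U" "h \<notin> U" for U
      using W_max[OF that(1,3)] x_le[OF that(1)] that(2) g(2) by fastforce
  qed (use \<open>y h < x h\<close> in simp)
  moreover have "y(h := y h + 1, g := y g - 1) \<in> base_set E f dy"
  proof (rule base_set_transfer_unit[OF assms(1) y \<open>h \<in> E\<close> \<open>g \<in> E\<close> \<open>g \<noteq> h\<close>[symmetric]])
    show "sum y U < f U" if "U \<subseteq> E" "h \<in> U" "g \<notin> U" for U
      using T_min[OF that(1,2)] y_le[OF that(1)] that(3) g(1) by fastforce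
  qed (use g(3) in simp)
  moreover have "y(h := y h + 1, g := y g - 1) = y(g := y g - 1, h := y h + 1)"
    using \<open>g \<noteq> h\<close> by (rule fun_upd_twist[symmetric])
  ultimately show ?thesis
    using \<open>g \<in> E\<close> \<open>g \<noteq> h\<close> g(3) by auto
qed

(* Regularity makes marg C k s monotone in s and lets a unit of s be traded for a unit of k;
   so it grows with k and with k + s. *)
lemma marg_mono_regular:
  assumes "regular C" "1 \<le> k" "k \<le> l" "k + s \<le> l + s'"
  shows "marg C k s \<le> marg C l s'"
proof -
  have t_mono: "marg C k s \<le> marg C k (s + j)" for j
  proof (induction j)
    case (Suc j)
    then show ?case
      using assms(1,2) unfolding regular_def by (metis add_Suc_right Suc_eq_plus1 order_trans)
  qed simp
  have shift: "marg C k (s + j) \<le> marg C (k + j) s" for s j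
  proof (induction j arbitrary: s)
    case (Suc j)
    have "marg C k (s + Suc j) \<le> marg C (k + j) (s + 1)"
      using Suc[of "s + 1"] by simp
    also have "\<dots> \<le> marg C (k + Suc j) s"
      using assms(1,2) unfolding regular_def by simp
    finally show ?case .
  qed simp
  have "marg C k s \<le> marg C k (s' + (l - k))"
    using t_mono[of "s' + (l - k) - s"] assms(3,4) by simp
  also have "\<dots> \<le> marg C l s'"
    using shift[of s' "l - k"] assms(3) by simp
  finally show ?thesis .
qed

lemma total_cost_transfer_unit:
  assumes "finite E" "p \<in> E" "q \<in> E" "p \<noteq> q" "1 \<le> x q"
  shows "total_cost E C t (x(p := x p + 1, q := x q - 1))
       = total_cost E C t x + marg (C p) (x p + 1) (t p) - marg (C q) (x q) (t q)"
  using sum_fun_upd[OF assms(1,2), of "\<lambda>e z. C e z (t e)" x "x p + 1"]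
    sum_fun_upd[OF assms(1,3), of "\<lambda>e z. C e z (t e)" "x(p := x p + 1)" "x q - 1"] assms(4,5)
  by (simp add: total_cost_def marg_def)

lemma l1_dist_fun_upd:
  assumes "finite E" "a \<in> E"
  shows "l1_dist E (t(a := k)) t' + nat \<bar>int (t a) - int (t' a)\<bar>
       = l1_dist E t t' + nat \<bar>int k - int (t' a)\<bar>"
  unfolding l1_dist_def by (rule sum_fun_upd[OF assms])

lemma l1_dist_transfer_unit:
  assumes "finite E" "p \<in> E" "q \<in> E" "p \<noteq> q" "u p < v p" "v q < u q"
  shows "l1_dist E (v(p := v p - 1, q := v q + 1)) u + 2 = l1_dist E v u"
  using l1_dist_fun_upd[OF assms(1,2), of v "v p - 1" u]
    l1_dist_fun_upd[OF assms(1,3), of "v(p := v p - 1)" "v q + 1" u] assms(4-6)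
  by (simp add: of_nat_diff)

lemma optimal_exists:
  assumes "finite E" "base_set E f d \<noteq> {}"
  shows "\<exists>x. optimal E f C t d x"
  using arg_min_if_finite(1)[OF finite_base_set assms(2)] arg_min_least[OF finite_base_set assms(2)]
    assms(1) unfolding optimal_def by blast

definition closest_optimal :: "'a set \<Rightarrow> ('a set \<Rightarrow> nat) \<Rightarrow> ('a \<Rightarrow> nat \<Rightarrow> nat \<Rightarrow> real)
    \<Rightarrow> ('a \<Rightarrow> nat) \<Rightarrow> nat \<Rightarrow> ('a \<Rightarrow> nat) \<Rightarrow> ('a \<Rightarrow> nat) \<Rightarrow> bool" where
  "closest_optimal E f C t d u v \<longleftrightarrow> optimal E f C t d v \<and>
     (\<forall>w. optimal E f C t d w \<longrightarrow> l1_dist E v u \<le> l1_dist E w u)"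

lemma closest_optimal_exists:
  assumes "finite E" "base_set E f d \<noteq> {}"
  shows "\<exists>v. closest_optimal E f C t d u v"
  using optimal_exists[OF assms] ex_has_least_nat[of "optimal E f C t d" _ "\<lambda>w. l1_dist E w u"]
  unfolding closest_optimal_def by blast

(* The transfer q \<rightarrow> p in the old optimum x does not decrease the old cost; the marginal
   inequalities turn this into the transfer p \<rightarrow> q in v not increasing the new cost. *)
lemma closest_optimal_no_transfer:
  assumes "finite E" "optimal E f C t dx x" "closest_optimal E f C t' dv x v"
    and "p \<in> E" "q \<in> E" "p \<noteq> q" "x p < v p" "v q < x q"
    and "x(p := x p + 1, q := x q - 1) \<in> base_set E f dx"
    and "v(p := v p - 1, q := v q + 1) \<in> base_set E f dv"
    and "marg (C q) (v q + 1) (t' q) \<le> marg (C q) (x q) (t q)"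
    and "marg (C p) (x p + 1) (t p) \<le> marg (C p) (v p) (t' p)"
  shows False
proof -
  let ?v = "v(p := v p - 1, q := v q + 1)"
  have "total_cost E C t x \<le> total_cost E C t (x(p := x p + 1, q := x q - 1))"
    using assms(2,9) unfolding optimal_def by blast
  then have "total_cost E C t' ?v \<le> total_cost E C t' v"
    using total_cost_transfer_unit[OF assms(1,4,5,6), of x C t]
      total_cost_transfer_unit[OF assms(1,5,4) assms(6)[symmetric], of v C t'] assms(6-8,11,12)
    by (simp add: fun_upd_twist)
  with assms(3,10) have "optimal E f C t' dv ?v"
    unfolding closest_optimal_def optimal_def by fastforce
  then have "l1_dist E v x \<le> l1_dist E ?v x"
    using assms(3) unfolding closest_optimal_def by blast
  then show False
    using l1_dist_transfer_unit[OF assms(1,4,5,6,7,8)] by simp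
qed

lemma closest_optimal_no_deficit:
  assumes "finite E" "polymatroid_rank E f" "optimal E f C t dx x" "closest_optimal E f C t' dv x v"
    and "dx \<le> dv" "q \<in> E" "v q < x q"
    and "\<And>p. p \<in> E \<Longrightarrow> p \<noteq> q \<Longrightarrow> x p < v p \<Longrightarrow>
      marg (C q) (v q + 1) (t' q) \<le> marg (C q) (x q) (t q) \<and>
      marg (C p) (x p + 1) (t p) \<le> marg (C p) (v p) (t' p)"
  shows False
proof -
  have xB: "x \<in> base_set E f dx" and vB: "v \<in> base_set E f dv"
    using assms(3,4) unfolding closest_optimal_def optimal_def by blast+
  obtain p where p: "p \<in> E" "p \<noteq> q" "x p < v p"
      "x(p := x p + 1, q := x q - 1) \<in> base_set E f dx" "v(p := v p - 1, q := v q + 1) \<in> base_set E f dv"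
    using base_set_exchange[OF assms(1,2) xB vB assms(5-7)] by blast
  then show False
    using closest_optimal_no_transfer[OF assms(1,3,4) p(1) assms(6) p(2,3) assms(7) p(4,5)] assms(8)[OF p(1-3)]
    by blast
qed

lemma closest_optimal_no_excess:
  assumes "finite E" "polymatroid_rank E f" "optimal E f C t dx x" "closest_optimal E f C t' dv x v"
    and "dv \<le> dx" "p \<in> E" "x p < v p"
    and "\<And>q. q \<in> E \<Longrightarrow> q \<noteq> p \<Longrightarrow> v q < x q \<Longrightarrow>
      marg (C q) (v q + 1) (t' q) \<le> marg (C q) (x q) (t q) \<and>
      marg (C p) (x p + 1) (t p) \<le> marg (C p) (v p) (t' p)"
  shows False
proof -
  have xB: "x \<in> base_set E f dx" and vB: "v \<in> base_set E f dv"
    using assms(3,4) unfolding closest_optimal_def optimal_def by blast+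
  obtain q where q: "q \<in> E" "q \<noteq> p" "v q < x q"
      "v(q := v q + 1, p := v p - 1) \<in> base_set E f dv" "x(q := x q - 1, p := x p + 1) \<in> base_set E f dx"
    using base_set_exchange[OF assms(1,2) vB xB assms(5-7)] by blast
  then have "x(p := x p + 1, q := x q - 1) \<in> base_set E f dx" "v(p := v p - 1, q := v q + 1) \<in> base_set E f dv"
    by (simp_all add: fun_upd_twist)
  then show False
    using closest_optimal_no_transfer[OF assms(1,3,4,6) q(1) q(2)[symmetric] assms(7) q(3)] assms(8)[OF q(1-3)]
    by blast
qed

lemma eq_if_le_sum_le:
  fixes u v :: "'a \<Rightarrow> nat"
  assumes "finite E" "\<forall>e. e \<notin> E \<longrightarrow> u e = 0" "\<forall>e. e \<notin> E \<longrightarrow> v e = 0"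
    and "\<forall>h\<in>E. u h \<le> v h" "sum v E \<le> sum u E"
  shows "v = u"
proof
  fix e
  show "v e = u e"
  proof (cases "e \<in> E")
    case True
    show ?thesis
    proof (rule ccontr)
      assume "v e \<noteq> u e"
      then have "u e < v e"
        using assms(4) True by (simp add: order_neq_le_trans)
      then have "sum u E < sum v E"
        using sum_strict_mono_ex1[OF assms(1,4)] True by blast
      then show False
        using assms(5) by simp
    qed
  qed (use assms(2,3) in simp)
qed

lemma eq_fun_upd_Suc_if_le:
  fixes u v :: "'a \<Rightarrow> nat"
  assumes "finite E" "\<forall>e. e \<notin> E \<longrightarrow> u e = 0" "\<forall>e. e \<notin> E \<longrightarrow> v e = 0"
    and "\<forall>h\<in>E. u h \<le> v h" "sum v E = sum u E + 1"
  shows "\<exists>g\<in>E. v = u(g := u g + 1)"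
proof -
  have "\<exists>g\<in>E. u g < v g"
  proof (rule ccontr)
    assume "\<not> (\<exists>g\<in>E. u g < v g)"
    then have "sum v E = sum u E"
      using assms(4) by (intro sum.cong) (meson antisym not_less)+
    then show False
      using assms(5) by simp
  qed
  then obtain g where g: "g \<in> E" "u g < v g"
    by blast
  have "v = u(g := u g + 1)"
  proof (rule eq_if_le_sum_le[OF assms(1) _ assms(3)])
    show "\<forall>e. e \<notin> E \<longrightarrow> (u(g := u g + 1)) e = 0"
      using assms(2) g(1) by auto
    show "\<forall>h\<in>E. (u(g := u g + 1)) h \<le> v h"
      using assms(4) g by auto
    show "sum v E \<le> sum (u(g := u g + 1)) E"
      using sum_fun_upd_nat[OF assms(1), of u g "u g + 1"] g(1) assms(5) by simp
  qed
  then show ?thesis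
    using g(1) by blast
qed

lemma eq_or_transfer_if_le_but_one:
  fixes u v :: "'a \<Rightarrow> nat"
  assumes "finite E" "\<forall>e. e \<notin> E \<longrightarrow> u e = 0" "\<forall>e. e \<notin> E \<longrightarrow> v e = 0" "a \<in> E"
    and "\<forall>h\<in>E. h \<noteq> a \<longrightarrow> u h \<le> v h" "u a \<le> v a + 1" "sum u E = sum v E"
  shows "v = u \<or> (\<exists>g\<in>E. g \<noteq> a \<and> 1 \<le> u a \<and> v = u(a := u a - 1, g := u g + 1))"
proof (cases "u a \<le> v a")
  case True
  then have "\<forall>h\<in>E. u h \<le> v h"
    using assms(5) by auto
  then show ?thesis
    using eq_if_le_sum_le[OF assms(1,2,3)] assms(7) by simp
next
  case False
  let ?u = "u(a := v a)"
  have "\<forall>h\<in>E. ?u h \<le> v h"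
    using assms(5) by auto
  moreover have "sum v E = sum ?u E + 1"
    using sum_fun_upd_nat[OF assms(1), of u a "v a"] assms(4,6,7) False by simp
  moreover have "\<forall>e. e \<notin> E \<longrightarrow> ?u e = 0"
    using assms(2,4) by auto
  ultimately obtain g where g: "g \<in> E" "v = ?u(g := ?u g + 1)"
    using eq_fun_upd_Suc_if_le[OF assms(1) _ assms(3)] by blast
  have "g \<noteq> a"
  proof
    assume "g = a"
    have "v a = (?u(g := ?u g + 1)) a"
      using g(2) by (rule arg_cong)
    then show False
      using \<open>g = a\<close> by simp
  qed
  then have "?u(g := ?u g + 1) = u(a := u a - 1, g := u g + 1)"
    using False assms(6) by (auto simp: fun_eq_iff)
  then show ?thesis
    using g \<open>g \<noteq> a\<close> False by auto
qed

lemma optimal_demand_Suc: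
  assumes "finite E" "polymatroid_rank E f" "\<And>e. e \<in> E \<Longrightarrow> regular (C e)"
    and "optimal E f C t d x" "base_set E f (d + 1) \<noteq> {}"
  shows "\<exists>y. optimal E f C t (d + 1) y \<and> exch_step E x y"
proof -
  obtain v where v: "closest_optimal E f C t (d + 1) x v"
    using closest_optimal_exists[OF assms(1,5)] by blast
  have "x h \<le> v h" if "h \<in> E" for h
  proof (rule ccontr)
    assume "\<not> x h \<le> v h"
    then have "v h < x h"
      by simp
    show False
    proof (rule closest_optimal_no_deficit[OF assms(1,2,4) v _ that \<open>v h < x h\<close>])
      fix p
      assume "p \<in> E" "p \<noteq> h" "x p < v p"
      then show "marg (C h) (v h + 1) (t h) \<le> marg (C h) (x h) (t h) \<and>
          marg (C p) (x p + 1) (t p) \<le> marg (C p) (v p) (t p)"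
        using that \<open>v h < x h\<close> by (auto intro!: marg_mono_regular assms(3))
    qed simp
  qed
  moreover have "x \<in> base_set E f d" "v \<in> base_set E f (d + 1)"
    using assms(4) v unfolding closest_optimal_def optimal_def by blast+
  ultimately obtain g where "g \<in> E" "v = x(g := x g + 1)"
    using eq_fun_upd_Suc_if_le[OF assms(1), of x v] unfolding base_set_def by auto
  then show ?thesis
    using v unfolding closest_optimal_def exch_step_def by blast
qed

lemma optimal_demand_pred:
  assumes "finite E" "polymatroid_rank E f" "\<And>e. e \<in> E \<Longrightarrow> regular (C e)"
    and "optimal E f C t d x" "1 \<le> d"
  shows "\<exists>y. optimal E f C t (d - 1) y \<and> exch_step E x y"
proof -
  have xB: "x \<in> base_set E f d"
    using assms(4) unfolding optimal_def by blast
  then have "base_set E f (d - 1) \<noteq> {}"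
    using base_set_remove_unit[OF assms(1) _ assms(5)] by blast
  then obtain v where v: "closest_optimal E f C t (d - 1) x v"
    using closest_optimal_exists[OF assms(1)] by blast
  have "v e \<le> x e" if "e \<in> E" for e
  proof (rule ccontr)
    assume "\<not> v e \<le> x e"
    then have "x e < v e"
      by simp
    show False
    proof (rule closest_optimal_no_excess[OF assms(1,2,4) v _ that \<open>x e < v e\<close>])
      fix q
      assume "q \<in> E" "q \<noteq> e" "v q < x q"
      then show "marg (C q) (v q + 1) (t q) \<le> marg (C q) (x q) (t q) \<and>
          marg (C e) (x e + 1) (t e) \<le> marg (C e) (v e) (t e)"
        using that \<open>x e < v e\<close> by (auto intro!: marg_mono_regular assms(3))
    qed simp
  qed
  moreover have "v \<in> base_set E f (d - 1)"
    using v unfolding closest_optimal_def optimal_def by blast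
  ultimately obtain g where "g \<in> E" "x = v(g := v g + 1)"
    using eq_fun_upd_Suc_if_le[OF assms(1), of v x] xB assms(5) unfolding base_set_def by auto
  moreover have "v = x(g := x g - 1)"
    using calculation(2) by (auto simp: fun_eq_iff)
  ultimately show ?thesis
    using v unfolding closest_optimal_def exch_step_def by force
qed

lemma optimal_time_Suc:
  assumes "finite E" "polymatroid_rank E f" "\<And>e. e \<in> E \<Longrightarrow> regular (C e)"
    and "optimal E f C t d x" "a \<in> E"
  shows "\<exists>y. optimal E f C (t(a := t a + 1)) d y \<and> (y = x \<or> exch_step E x y)"
proof -
  let ?t = "t(a := t a + 1)"
  have xB: "x \<in> base_set E f d"
    using assms(4) unfolding optimal_def by blast
  then obtain v where v: "closest_optimal E f C ?t d x v"
    using closest_optimal_exists[OF assms(1)] by blast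
  have deficit: "h = a \<and> x a \<le> v a + 1" if "h \<in> E" "v h < x h" for h
  proof (rule ccontr)
    assume far: "\<not> (h = a \<and> x a \<le> v a + 1)"
    show False
    proof (rule closest_optimal_no_deficit[OF assms(1,2,4) v order_refl that])
      fix p
      assume "p \<in> E" "p \<noteq> h" "x p < v p"
      then show "marg (C h) (v h + 1) (?t h) \<le> marg (C h) (x h) (t h) \<and>
          marg (C p) (x p + 1) (t p) \<le> marg (C p) (v p) (?t p)"
        using that far by (auto intro!: marg_mono_regular assms(3))
    qed
  qed
  have vB: "v \<in> base_set E f d"
    using v unfolding closest_optimal_def optimal_def by blast
  have "\<forall>h\<in>E. h \<noteq> a \<longrightarrow> x h \<le> v h" "x a \<le> v a + 1"
    using deficit deficit[OF assms(5)] by (meson not_le, linarith)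
  then have "v = x \<or> (\<exists>g\<in>E. g \<noteq> a \<and> 1 \<le> x a \<and> v = x(a := x a - 1, g := x g + 1))"
    using eq_or_transfer_if_le_but_one[OF assms(1) _ _ assms(5)] xB vB unfolding base_set_def by auto
  then show ?thesis
    using v assms(5) unfolding closest_optimal_def exch_step_def by metis
qed

lemma optimal_time_pred:
  assumes "finite E" "polymatroid_rank E f" "\<And>e. e \<in> E \<Longrightarrow> regular (C e)"
    and "optimal E f C t d x" "a \<in> E" "1 \<le> t a"
  shows "\<exists>y. optimal E f C (t(a := t a - 1)) d y \<and> (y = x \<or> exch_step E x y)"
proof -
  let ?t = "t(a := t a - 1)"
  have xB: "x \<in> base_set E f d"
    using assms(4) unfolding optimal_def by blast
  then obtain v where v: "closest_optimal E f C ?t d x v"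
    using closest_optimal_exists[OF assms(1)] by blast
  have excess: "e = a \<and> v a \<le> x a + 1" if "e \<in> E" "x e < v e" for e
  proof (rule ccontr)
    assume far: "\<not> (e = a \<and> v a \<le> x a + 1)"
    show False
    proof (rule closest_optimal_no_excess[OF assms(1,2,4) v order_refl that])
      fix q
      assume "q \<in> E" "q \<noteq> e" "v q < x q"
      then show "marg (C q) (v q + 1) (?t q) \<le> marg (C q) (x q) (t q) \<and>
          marg (C e) (x e + 1) (t e) \<le> marg (C e) (v e) (?t e)"
        using that far assms(6) by (auto intro!: marg_mono_regular assms(3))
    qed
  qed
  have vB: "v \<in> base_set E f d"
    using v unfolding closest_optimal_def optimal_def by blast
  have "\<forall>h\<in>E. h \<noteq> a \<longrightarrow> v h \<le> x h" "v a \<le> x a + 1"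
    using excess excess[OF assms(5)] by (meson not_le, linarith)
  then have "x = v \<or> (\<exists>g\<in>E. g \<noteq> a \<and> 1 \<le> v a \<and> x = v(a := v a - 1, g := v g + 1))"
    using eq_or_transfer_if_le_but_one[OF assms(1) _ _ assms(5)] xB vB unfolding base_set_def by auto
  moreover have "v = x(g := x g - 1, a := x a + 1)" "1 \<le> x g"
    if "g \<noteq> a" "1 \<le> v a" "x = v(a := v a - 1, g := v g + 1)" for g
    using that by (auto simp: fun_eq_iff)
  ultimately show ?thesis
    using v assms(5) unfolding closest_optimal_def exch_step_def by metis
qed

lemma relpowp_le_Suc_I2:
  "x' = x \<or> R x x' \<Longrightarrow> \<exists>k\<le>n. (R ^^ k) x' y \<Longrightarrow> \<exists>k\<le>Suc n. (R ^^ k) x y"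
  by (metis le_SucI Suc_le_mono relpowp_Suc_I2)

lemma relpowp_le_trans:
  assumes "\<exists>k\<le>m. (R ^^ k) x y" "\<exists>k\<le>n. (R ^^ k) y z"
  shows "\<exists>k\<le>m + n. (R ^^ k) x z"
proof -
  obtain k l where "k \<le> m" "l \<le> n" "(R ^^ k) x y" "(R ^^ l) y z"
    using assms by blast
  then have "k + l \<le> m + n" "(R ^^ (k + l)) x z"
    by (auto simp: relpowp_add)
  then show ?thesis
    by blast
qed

lemma optimal_reach_demand_up:
  assumes "finite E" "polymatroid_rank E f" "\<And>e. e \<in> E \<Longrightarrow> regular (C e)"
    and "optimal E f C t d x" "base_set E f (d + n) \<noteq> {}"
  shows "\<exists>y. optimal E f C t (d + n) y \<and> (\<exists>k\<le>n. (exch_step E ^^ k) x y)"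
  using assms(4,5)
proof (induction n arbitrary: d x)
  case 0
  then show ?case
    by force
next
  case (Suc n)
  have "base_set E f (d + 1) \<noteq> {}"
    using base_set_nonempty_le[OF assms(1) Suc.prems(2)] by simp
  then obtain y where "optimal E f C t (d + 1) y" "exch_step E x y"
    using optimal_demand_Suc[OF assms(1-3) Suc.prems(1)] by blast
  with Suc.IH[of "d + 1" y] Suc.prems(2) show ?case
    by (auto intro: relpowp_le_Suc_I2)
qed

lemma optimal_reach_demand_down:
  assumes "finite E" "polymatroid_rank E f" "\<And>e. e \<in> E \<Longrightarrow> regular (C e)"
    and "optimal E f C t (d + n) x"
  shows "\<exists>y. optimal E f C t d y \<and> (\<exists>k\<le>n. (exch_step E ^^ k) x y)"
  using assms(4)
proof (induction n arbitrary: x)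
  case 0
  then show ?case
    by force
next
  case (Suc n)
  obtain y where "optimal E f C t (d + n) y" "exch_step E x y"
    using optimal_demand_pred[OF assms(1-3) Suc.prems] by auto
  with Suc.IH[of y] show ?case
    by (auto intro: relpowp_le_Suc_I2)
qed

lemma optimal_reach_demand:
  assumes "finite E" "polymatroid_rank E f" "\<And>e. e \<in> E \<Longrightarrow> regular (C e)"
    and "optimal E f C t d x" "base_set E f d' \<noteq> {}"
  shows "\<exists>y. optimal E f C t d' y \<and> (\<exists>k\<le>nat \<bar>int d - int d'\<bar>. (exch_step E ^^ k) x y)"
proof (cases "d \<le> d'")
  case True
  then have d': "d + (d' - d) = d'" and dist: "nat \<bar>int d - int d'\<bar> = d' - d"
    by arith+
  show ?thesis
    unfolding dist using optimal_reach_demand_up[OF assms(1-4), of "d' - d"] assms(5)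
    unfolding d' by blast
next
  case False
  then have d: "d' + (d - d') = d" and dist: "nat \<bar>int d - int d'\<bar> = d - d'"
    by arith+
  have "optimal E f C t (d' + (d - d')) x"
    using d assms(4) by simp
  from optimal_reach_demand_down[OF assms(1-3) this] show ?thesis
    unfolding dist .
qed

lemma optimal_cong_time:
  "\<forall>e\<in>E. t e = t' e \<Longrightarrow> optimal E f C t d x \<longleftrightarrow> optimal E f C t' d x"
  unfolding optimal_def total_cost_def by simp

lemma optimal_reach_time:
  assumes "finite E" "polymatroid_rank E f" "\<And>e. e \<in> E \<Longrightarrow> regular (C e)"
    and "optimal E f C t d x"
  shows "\<exists>y. optimal E f C t' d y \<and> (\<exists>k\<le>l1_dist E t t'. (exch_step E ^^ k) x y)"
proof -
  have "\<exists>y. optimal E f C t' d y \<and> (\<exists>k\<le>n. (exch_step E ^^ k) x y)"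
    if "l1_dist E t t' = n" "optimal E f C t d x" for n t x
    using that
  proof (induction n arbitrary: t x)
    case 0
    then have "\<forall>e\<in>E. t e = t' e"
      using assms(1) by (simp add: l1_dist_def)
    then have "optimal E f C t' d x"
      using optimal_cong_time 0 by blast
    then show ?case
      by (intro exI[of _ x]) simp
  next
    case (Suc n)
    have "\<exists>a\<in>E. t a \<noteq> t' a"
    proof (rule ccontr)
      assume "\<not> (\<exists>a\<in>E. t a \<noteq> t' a)"
      then have "l1_dist E t t' = 0"
        unfolding l1_dist_def by simp
      then show False
        using Suc.prems(1) by simp
    qed
    then obtain a where a: "a \<in> E" "t a \<noteq> t' a"
      by blast
    obtain s y where s: "l1_dist E (t(a := s)) t' = n"
      and y: "optimal E f C (t(a := s)) d y" "y = x \<or> exch_step E x y"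
    proof (cases "t a < t' a")
      case True
      then have "l1_dist E (t(a := t a + 1)) t' = n"
        using l1_dist_fun_upd[OF assms(1) a(1), of t "t a + 1" t'] Suc.prems(1) by simp
      then show ?thesis
        using that optimal_time_Suc[OF assms(1-3) Suc.prems(2) a(1)] by blast
    next
      case False
      then have "l1_dist E (t(a := t a - 1)) t' = n"
        using l1_dist_fun_upd[OF assms(1) a(1), of t "t a - 1" t'] Suc.prems(1) a(2) by simp
      moreover have "1 \<le> t a"
        using False a(2) by simp
      ultimately show ?thesis
        using that optimal_time_pred[OF assms(1-3) Suc.prems(2) a(1)] by blast
    qed
    obtain z where "optimal E f C t' d z" "\<exists>k\<le>n. (exch_step E ^^ k) y z"
      using Suc.IH[OF s y(1)] by blast
    then show ?case
      using relpowp_le_Suc_I2[of y x "exch_step E", OF y(2)] by blast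
  qed
  then show ?thesis
    using assms(4) by blast
qed

theorem corollary3p6:
  fixes E :: "'a set" and f :: "'a set \<Rightarrow> nat" and C :: "'a \<Rightarrow> nat \<Rightarrow> nat \<Rightarrow> real"
    and D :: "nat set"
  assumes "finite E" and "E \<noteq> {}"
    and "polymatroid_rank E f"
    and "\<And>e x t. e \<in> E \<Longrightarrow> C e x t \<ge> 0"
    and "\<And>e. e \<in> E \<Longrightarrow> regular (C e)"
    and "\<And>d. d \<in> D \<Longrightarrow> base_set E f d \<noteq> {}"
  shows "\<forall>t d x t' d'. d \<in> D \<longrightarrow> optimal E f C t d x \<longrightarrow> d' \<in> D \<longrightarrow>
           (\<exists>x' k. optimal E f C t' d' x' \<and>
                   k \<le> l1_dist E t t' + nat \<bar>int d - int d'\<bar> \<and>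
                   (exch_step E ^^ k) x x')"
proof (intro allI impI)
  fix t d x t' d'
  assume "d \<in> D" "optimal E f C t d x" "d' \<in> D"
  obtain y where y: "optimal E f C t d' y" "\<exists>k\<le>nat \<bar>int d - int d'\<bar>. (exch_step E ^^ k) x y"
    using optimal_reach_demand[OF assms(1,3,5) \<open>optimal E f C t d x\<close> assms(6)[OF \<open>d' \<in> D\<close>]]
    by blast
  obtain z where z: "optimal E f C t' d' z" "\<exists>k\<le>l1_dist E t t'. (exch_step E ^^ k) y z"
    using optimal_reach_time[OF assms(1,3,5) y(1)] by blast
  obtain k where "k \<le> nat \<bar>int d - int d'\<bar> + l1_dist E t t'" "(exch_step E ^^ k) x z"
    using relpowp_le_trans[OF y(2) z(2)] by blast
  then show "\<exists>x' k. optimal E f C t' d' x' \<and> k \<le> l1_dist E t t' + nat \<bar>int d - int d'\<bar> \<and>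
      (exch_step E ^^ k) x x'"
    using z(1) by (intro exI[of _ z] exI[of _ k]) simp
qed

end
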